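(* Let $\{p_{(R,\alpha)}(\mathbf{x})\}_{(R,\alpha)}$ be a replacement rule satisfying the Fixation Axiom and Assumptions 1, 3 and 4. Then for every state $\mathbf{x}\in\{0,1\}^G$, $$\hat\Delta_{\mathrm{sel}}(\mathbf{x})=\sum_{i\in I}X_i\big(W_i(\mathbf{x})-V_i\big).$$
   Context: $G$ is a finite nonempty set of genetic sites, $n=|G|$, partitioned into sets $G_i$ ($i\in I$, the individuals), $n_i=|G_i|$; $g\sim h$ means $g,h\in G_i$ for some $i$. A state is $\mathbf{x}\in\{0,1\}^G$; $\mathbf{a}$ is the all-zero and $\mathbf{A}$ the all-one state. A replacement event is $(R,\alpha)$ with $R\subseteq G$, $\alpha:R\to G$; a replacement rule gives for each state a probability distribution $\{p_{(R,\alpha)}(\mathbf{x})\}$ over events. Fixation Axiom: there exist $g\in G$, $m\ge1$, events $(R_k,\alpha_k)_{k=1}^m$ with $p_{(R_k,\alpha_k)}(\mathbf{x})>0$ for all $k,\mathbf{x}$, $g\in R_k$ for some $k$, and $\tilde\alpha_1\circ\cdots\circ\tilde\alpha_m(h)=g$ for all $h$, where $\tilde\alpha_k$ equals $\alpha_k$ on $R_k$ and the identity elsewhere. $e_{gh}(\mathbf{x})=\sum_{(R,\alpha):h\in R,\alpha(h)=g}p_{(R,\alpha)}(\mathbf{x})$, $d_g(\mathbf{x})=\sum_he_{hg}(\mathbf{x})$. Assumption 1: $p_{(R,\alpha)}(\mathbf{A})=p_{(R,\alpha)}(\mathbf{a})$ for all events; $e^\circ_{gh},d^\circ_g$ denote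 values in these states. Reproductive values: the unique $(v_g)$ with $d^\circ_gv_g=\sum_he^\circ_{gh}v_h$ for all $g$ and $\sum_gv_g=n$. $\hat b_g(\mathbf{x})=\sum_he_{gh}(\mathbf{x})v_h$, $\hat d_g(\mathbf{x})=v_gd_g(\mathbf{x})$, fitness $w_g(\mathbf{x})=v_g-\hat d_g(\mathbf{x})+\hat b_g(\mathbf{x})$, $\hat\Delta_{\mathrm{sel}}(\mathbf{x})=\sum_gx_g(\hat b_g(\mathbf{x})-\hat d_g(\mathbf{x}))$. Individual quantities: $X_i=\frac1{n_i}\sum_{g\in G_i}x_g$, $V_i=\sum_{g\in G_i}v_g$, $W_i(\mathbf{x})=\sum_{g\in G_i}w_g(\mathbf{x})$. Assumption 3 (coherence of individuals): if $g\sim h$, then for each state $\mathbf{x}$ and each event $(R,\alpha)$ with $p_{(R,\alpha)}(\mathbf{x})>0$, either $g,h\in R$ or $g,h\notin R$. Assumption 4 (fair meiosis): if $(R,\alpha_1)$, $(R,\alpha_2)$ are events with the same $R$ and $\alpha_1(g)\sim\alpha_2(g)$ for all $g\in R$, then $p_{(R,\alpha_1)}(\mathbf{x})=p_{(R,\alpha_2)}(\mathbf{x})$ for every state $\mathbf{x}$. *)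

theory Defs
  imports Complex_Main
begin

text \<open>Genetic sites form the finite type 'g (so G = UNIV, n = CARD('g)).
  A state is a function 'g \<Rightarrow> bool (x_g = 1 iff x g).
  An event (R, \<alpha>) with \<alpha> : R \<rightarrow> G is represented by the pair (R, \<alpha>~), where \<alpha>~
  agrees with \<alpha> on R and is the identity outside R.
  Individuals: ind :: 'g \<Rightarrow> 'i, I = range ind, G_i = {g. ind g = i}.\<close>

type_synonym 'g event = "'g set \<times> ('g \<Rightarrow> 'g)"
type_synonym 'g rule = "'g event \<Rightarrow> ('g \<Rightarrow> bool) \<Rightarrow> real"

definition events :: "'g event set" where
  "events = {(R, \<alpha>). \<forall>h. h \<notin> R \<longrightarrow> \<alpha> h = h}"

definition state_a :: "'g \<Rightarrow> bool" where "state_a = (\<lambda>_. False)"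
definition state_A :: "'g \<Rightarrow> bool" where "state_A = (\<lambda>_. True)"

definition replacement_rule :: "('g::finite) rule \<Rightarrow> bool" where
  "replacement_rule p \<longleftrightarrow>
     (\<forall>x. \<forall>ev\<in>events. 0 \<le> p ev x) \<and> (\<forall>x. (\<Sum>ev\<in>events. p ev x) = 1)"

definition fixation_axiom :: "('g::finite) rule \<Rightarrow> bool" where
  "fixation_axiom p \<longleftrightarrow>
     (\<exists>g (es :: 'g event list). es \<noteq> [] \<and> set es \<subseteq> events
        \<and> (\<forall>ev\<in>set es. \<forall>x. 0 < p ev x)
        \<and> (\<exists>ev\<in>set es. g \<in> fst ev)
        \<and> (\<forall>h. foldr (\<lambda>ev f. snd ev \<circ> f) es id h = g))"

definition e_rate :: "('g::finite) rule \<Rightarrow> ('g \<Rightarrow> bool) \<Rightarrow> 'g \<Rightarrow> 'g \<Rightarrow> real" where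
  "e_rate p x g h = (\<Sum>ev\<in>{ev\<in>events. h \<in> fst ev \<and> snd ev h = g}. p ev x)"

definition d_rate :: "('g::finite) rule \<Rightarrow> ('g \<Rightarrow> bool) \<Rightarrow> 'g \<Rightarrow> real" where
  "d_rate p x g = (\<Sum>h\<in>UNIV. e_rate p x h g)"

definition assumption1 :: "('g::finite) rule \<Rightarrow> bool" where
  "assumption1 p \<longleftrightarrow> (\<forall>ev\<in>events. p ev state_A = p ev state_a)"

text \<open>Reproductive values, computed with e\<degree>, d\<degree> (values in state a, = values in A by Assumption 1).\<close>
definition repro_values :: "('g::finite) rule \<Rightarrow> 'g \<Rightarrow> real" where
  "repro_values p = (THE v. (\<forall>g. d_rate p state_a g * v g = (\<Sum>h\<in>UNIV. e_rate p state_a g h * v h))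
                          \<and> (\<Sum>g\<in>UNIV. v g) = real (card (UNIV :: 'g set)))"

definition b_hat :: "('g::finite) rule \<Rightarrow> ('g \<Rightarrow> bool) \<Rightarrow> 'g \<Rightarrow> real" where
  "b_hat p x g = (\<Sum>h\<in>UNIV. e_rate p x g h * repro_values p h)"

definition d_hat :: "('g::finite) rule \<Rightarrow> ('g \<Rightarrow> bool) \<Rightarrow> 'g \<Rightarrow> real" where
  "d_hat p x g = repro_values p g * d_rate p x g"

definition fitness :: "('g::finite) rule \<Rightarrow> ('g \<Rightarrow> bool) \<Rightarrow> 'g \<Rightarrow> real" where
  "fitness p x g = repro_values p g - d_hat p x g + b_hat p x g"

definition Delta_sel :: "('g::finite) rule \<Rightarrow> ('g \<Rightarrow> bool) \<Rightarrow> real" where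
  "Delta_sel p x = (\<Sum>g\<in>UNIV. of_bool (x g) * (b_hat p x g - d_hat p x g))"

definition ind_X :: "('g::finite \<Rightarrow> 'i) \<Rightarrow> ('g \<Rightarrow> bool) \<Rightarrow> 'i \<Rightarrow> real" where
  "ind_X ind x i = (1 / real (card {g. ind g = i})) * (\<Sum>g\<in>{g. ind g = i}. of_bool (x g))"

definition ind_V :: "('g::finite \<Rightarrow> 'i) \<Rightarrow> 'g rule \<Rightarrow> 'i \<Rightarrow> real" where
  "ind_V ind p i = (\<Sum>g\<in>{g. ind g = i}. repro_values p g)"

definition ind_W :: "('g::finite \<Rightarrow> 'i) \<Rightarrow> 'g rule \<Rightarrow> ('g \<Rightarrow> bool) \<Rightarrow> 'i \<Rightarrow> real" where
  "ind_W ind p x i = (\<Sum>g\<in>{g. ind g = i}. fitness p x g)"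

definition coherence :: "('g::finite \<Rightarrow> 'i) \<Rightarrow> 'g rule \<Rightarrow> bool" where
  "coherence ind p \<longleftrightarrow>
     (\<forall>g h. ind g = ind h \<longrightarrow>
        (\<forall>x. \<forall>R \<alpha>. (R, \<alpha>) \<in> events \<longrightarrow> 0 < p (R, \<alpha>) x \<longrightarrow> (g \<in> R \<longleftrightarrow> h \<in> R)))"

definition fair_meiosis :: "('g::finite \<Rightarrow> 'i) \<Rightarrow> 'g rule \<Rightarrow> bool" where
  "fair_meiosis ind p \<longleftrightarrow>
     (\<forall>R \<alpha>1 \<alpha>2. (R, \<alpha>1) \<in> events \<longrightarrow> (R, \<alpha>2) \<in> events \<longrightarrow>
        (\<forall>g\<in>R. ind (\<alpha>1 g) = ind (\<alpha>2 g)) \<longrightarrow> (\<forall>x. p (R, \<alpha>1) x = p (R, \<alpha>2) x))"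

end

(* Under the Fixation Axiom every site has an ancestral lineage ending in one common site,
   and a maximum principle along lineages shows that every solution of the homogeneous
   system has constant sign; hence the solutions form a line and v is well defined.
   Fair meiosis makes e_gh depend on g only through its individual, and coherence does the
   same for d_g; since d_g > 0, v_g and therefore b_g - d_g are constant on individuals,
   and grouping Delta_sel by individuals gives sum_i X_i (W_i - V_i). *)

theory Submission
  imports Defs "HOL-Analysis.Cartesian_Space"
begin

(* e k g is the rate at which g is replaced by a copy of k, so the first factor is d_g. *)
definition balanced :: "('g::finite \<Rightarrow> 'g \<Rightarrow> real) \<Rightarrow> ('g \<Rightarrow> real) \<Rightarrow> bool" where
  "balanced e u \<longleftrightarrow> (\<forall>g. (\<Sum>k\<in>UNIV. e k g) * u g = (\<Sum>h\<in>UNIV. e g h * u h))"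

(* (h, k) \<in> lineage e: k is a possible parent of h, so (lineage e)\<^sup>* traces ancestry. *)
definition lineage :: "('g \<Rightarrow> 'g \<Rightarrow> real) \<Rightarrow> ('g \<times> 'g) set" where
  "lineage e = {(h, k). 0 < e k h}"

lemma balanced_scale:
  assumes "balanced e u" shows "balanced e (\<lambda>g. c * u g)"
  using assms by (simp add: balanced_def sum_distrib_left mult.left_commute)

lemma balanced_diff:
  assumes "balanced e u" "balanced e v" shows "balanced e (\<lambda>g. u g - v g)"
  using assms by (simp add: balanced_def right_diff_distrib sum_subtractf)

lemma balanced_nonzeroE:
  fixes e :: "'g::finite \<Rightarrow> 'g \<Rightarrow> real"
  obtains u g where "balanced e u" "u g \<noteq> 0"
proof -
  define M :: "real^'g^'g" where "M = (\<chi> g h. e g h - (if g = h then (\<Sum>k\<in>UNIV. e k g) else 0))"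
  define one :: "real^'g" where "one = (\<chi> _. 1)"
  have M_apply: "(M *v x) $ g = (\<Sum>h\<in>UNIV. e g h * x $ h) - (\<Sum>k\<in>UNIV. e k g) * x $ g" for x g
    by (simp add: M_def matrix_vector_mult_def left_diff_distrib sum_subtractf
        if_distrib[where f="\<lambda>t. t * _"] cong: if_cong)
  \<comment> \<open>The columns of M sum to zero, so M is singular.\<close>
  have "one \<noteq> 0"
    by (simp add: one_def vec_eq_iff)
  moreover have "one v* M = 0"
    by (simp add: vec_eq_iff M_def one_def vector_matrix_mult_def sum_subtractf)
  ultimately have "M ** B \<noteq> mat 1" for B
    by (metis vector_matrix_mul_assoc vector_matrix_mul_rid vector_matrix_mult_0)
  then have "\<not> (\<exists>B. B ** M = mat 1)"
    using matrix_left_right_inverse by blast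
  then obtain x where x: "M *v x = 0" "x \<noteq> 0"
    using matrix_left_invertible_ker by blast
  moreover have "balanced e (vec_nth x)"
    using x(1) by (auto simp: balanced_def vec_eq_iff M_apply)
  ultimately show ?thesis
    using that by (auto simp: vec_eq_iff)
qed

lemma sum_UNIV_split: "sum f (UNIV :: 'a::finite set) = sum f A + sum f (- A)"
  using sum.union_disjoint[of A "- A" f] by (simp add: Compl_partition)

lemma balanced_pos_closed:
  fixes e :: "'g::finite \<Rightarrow> 'g \<Rightarrow> real"
  assumes nonneg: "\<And>g h. 0 \<le> e g h" and bal: "balanced e u"
    and "0 < u h" and "(h, k) \<in> lineage e"
  shows "0 < u k"
proof -
  \<comment> \<open>Summing the balance equations over S shows that sites in S have no parents outside S.\<close>
  define S where "S = {g. 0 < u g}"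
  define d where "d g = (\<Sum>k\<in>UNIV. e k g)" for g
  have "(\<Sum>g\<in>S. d g * u g) = (\<Sum>g\<in>S. \<Sum>h\<in>UNIV. e g h * u h)"
    using bal by (simp add: balanced_def d_def)
  also have "\<dots> \<le> (\<Sum>g\<in>S. \<Sum>h\<in>S. e g h * u h)"
  proof (rule sum_mono)
    fix g
    have "(\<Sum>h\<in>UNIV. e g h * u h) = (\<Sum>h\<in>S. e g h * u h) + (\<Sum>h\<in>-S. e g h * u h)"
      by (rule sum_UNIV_split)
    moreover have "(\<Sum>h\<in>-S. e g h * u h) \<le> 0"
      by (rule sum_nonpos) (simp add: S_def mult_nonneg_nonpos nonneg)
    ultimately show "(\<Sum>h\<in>UNIV. e g h * u h) \<le> (\<Sum>h\<in>S. e g h * u h)"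
      by simp
  qed
  also have "\<dots> = (\<Sum>h\<in>S. (\<Sum>g\<in>S. e g h) * u h)"
    by (subst sum.swap) (simp add: sum_distrib_right)
  finally have "(\<Sum>h\<in>S. (d h - (\<Sum>g\<in>S. e g h)) * u h) \<le> 0"
    by (simp add: left_diff_distrib sum_subtractf)
  moreover have "d h - (\<Sum>g\<in>S. e g h) = (\<Sum>g\<in>-S. e g h)" for h
    by (simp add: d_def sum_UNIV_split[of _ S])
  moreover have outflow_nonneg: "0 \<le> (\<Sum>g\<in>-S. e g h) * u h" if "h \<in> S" for h
    using that by (simp add: S_def sum_nonneg nonneg)
  ultimately have "(\<Sum>h\<in>S. (\<Sum>g\<in>-S. e g h) * u h) = 0"
    by (simp add: order_antisym sum_nonneg)
  then have "\<forall>h\<in>S. (\<Sum>g\<in>-S. e g h) * u h = 0"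
    by (simp add: sum_nonneg_eq_0_iff outflow_nonneg)
  then have "(\<Sum>g\<in>-S. e g h) = 0"
    using \<open>0 < u h\<close> by (simp add: S_def)
  then have "k \<notin> S \<Longrightarrow> e k h = 0"
    by (simp add: sum_nonneg_eq_0_iff nonneg)
  then show ?thesis
    using \<open>(h, k) \<in> lineage e\<close> by (auto simp: lineage_def S_def)
qed

lemma balanced_nonpos_if_root_nonpos:
  fixes e :: "'g::finite \<Rightarrow> 'g \<Rightarrow> real"
  assumes nonneg: "\<And>g h. 0 \<le> e g h" and bal: "balanced e u"
    and root: "\<And>h. (h, r) \<in> (lineage e)\<^sup>*" and "u r \<le> 0"
  shows "u g \<le> 0"
proof (rule ccontr)
  assume "\<not> u g \<le> 0"
  have "0 < u r"
    using root[of g]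
  proof (induction rule: rtrancl_induct)
    case base
    show ?case using \<open>\<not> u g \<le> 0\<close> by simp
  next
    case (step h k)
    then show ?case using balanced_pos_closed[OF nonneg bal] by blast
  qed
  with \<open>u r \<le> 0\<close> show False by simp
qed

lemma balanced_sign_definite:
  fixes e :: "'g::finite \<Rightarrow> 'g \<Rightarrow> real"
  assumes nonneg: "\<And>g h. 0 \<le> e g h" and bal: "balanced e u"
    and root: "\<And>h. (h, r) \<in> (lineage e)\<^sup>*"
  shows "(\<forall>g. u g \<le> 0) \<or> (\<forall>g. 0 \<le> u g)"
proof (cases "u r \<le> 0")
  case True
  then show ?thesis using balanced_nonpos_if_root_nonpos[OF nonneg bal root] by blast
next
  case False
  have "balanced e (\<lambda>g. -1 * u g)"
    by (rule balanced_scale[OF bal])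
  then have "-1 * u g \<le> 0" for g
    by (rule balanced_nonpos_if_root_nonpos[OF nonneg _ root]) (use False in simp)
  then show ?thesis by simp
qed

lemma balanced_normalized_ex1:
  fixes e :: "'g::finite \<Rightarrow> 'g \<Rightarrow> real"
  assumes nonneg: "\<And>g h. 0 \<le> e g h" and root: "\<And>h. (h, r) \<in> (lineage e)\<^sup>*"
  shows "\<exists>!v. balanced e v \<and> (\<Sum>g\<in>UNIV. v g) = real CARD('g)"
proof -
  have sum_eq_0: "(\<Sum>g\<in>UNIV. u g) = 0 \<longleftrightarrow> (\<forall>g. u g = 0)" if "balanced e u" for u
    using balanced_sign_definite[OF nonneg that root]
          sum_nonneg_eq_0_iff[of UNIV u] sum_nonneg_eq_0_iff[of UNIV "\<lambda>g. - u g"]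
    by (auto simp: sum_negf)
  obtain w g0 where w: "balanced e w" "w g0 \<noteq> 0"
    by (rule balanced_nonzeroE)
  define c where "c = real CARD('g) / (\<Sum>g\<in>UNIV. w g)"
  define v where "v g = c * w g" for g
  have "(\<Sum>g\<in>UNIV. w g) \<noteq> 0"
    using sum_eq_0[OF w(1)] w(2) by blast
  then have "(\<Sum>g\<in>UNIV. v g) = real CARD('g)"
    unfolding v_def sum_distrib_left[symmetric] c_def by simp
  moreover have "balanced e v"
    unfolding v_def by (rule balanced_scale[OF w(1)])
  ultimately have v: "balanced e v \<and> (\<Sum>g\<in>UNIV. v g) = real CARD('g)"
    by blast
  moreover have "v' = v" if "balanced e v' \<and> (\<Sum>g\<in>UNIV. v' g) = real CARD('g)" for v'
  proof -
    have "balanced e (\<lambda>g. v' g - v g)" and "(\<Sum>g\<in>UNIV. v' g - v g) = 0"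
      using that v by (auto intro: balanced_diff simp: sum_subtractf)
    then show "v' = v"
      using sum_eq_0 by fastforce
  qed
  ultimately show ?thesis by blast
qed

lemma e_rate_nonneg:
  assumes "replacement_rule p" shows "0 \<le> e_rate p x g h"
  using assms unfolding replacement_rule_def e_rate_def by (auto intro: sum_nonneg)

lemma p_le_e_rate:
  assumes "replacement_rule p" "ev \<in> events" "h \<in> fst ev"
  shows "p ev x \<le> e_rate p x (snd ev h) h"
  unfolding e_rate_def
  by (rule member_le_sum) (use assms in \<open>auto simp: replacement_rule_def\<close>)

lemma e_rate_le_d_rate:
  assumes "replacement_rule p" shows "e_rate p x k h \<le> d_rate p x h"
  unfolding d_rate_def by (rule member_le_sum) (auto intro: e_rate_nonneg[OF assms])

lemma d_rate_eq_sum_events: "d_rate p x g = (\<Sum>ev\<in>events. if g \<in> fst ev then p ev x else 0)"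
proof -
  have "d_rate p x g = (\<Sum>h\<in>UNIV. \<Sum>ev\<in>{ev\<in>{ev\<in>events. g \<in> fst ev}. snd ev g = h}. p ev x)"
    unfolding d_rate_def e_rate_def by (intro sum.cong) auto
  also have "\<dots> = (\<Sum>ev\<in>{ev\<in>events. g \<in> fst ev}. p ev x)"
    by (rule sum.group) auto
  finally show ?thesis
    by (simp add: sum.inter_filter)
qed

lemma d_rate_eq_if_coherent:
  fixes p :: "('g::finite) rule"
  assumes rr: "replacement_rule p" and coh: "coherence ind p" and "ind g = ind g'"
  shows "d_rate p x g = d_rate p x g'"
  unfolding d_rate_eq_sum_events
proof (rule sum.cong[OF refl])
  fix ev :: "'g event" assume ev: "ev \<in> events"
  obtain R \<alpha> where ev_eq: "ev = (R, \<alpha>)" by fastforce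
  have "p ev x = 0 \<or> (g \<in> R \<longleftrightarrow> g' \<in> R)"
    using rr coh ev \<open>ind g = ind g'\<close> unfolding replacement_rule_def coherence_def ev_eq
    by (metis order_neq_le_trans)
  then show "(if g \<in> fst ev then p ev x else 0) = (if g' \<in> fst ev then p ev x else 0)"
    by (auto simp: ev_eq)
qed

definition relabel :: "('g \<Rightarrow> 'g) \<Rightarrow> 'g event \<Rightarrow> 'g event" where
  "relabel \<tau> ev = (fst ev, \<lambda>k. if k \<in> fst ev then \<tau> (snd ev k) else k)"

lemma relabel_in_events: "relabel \<tau> ev \<in> events"
  by (simp add: relabel_def events_def)

lemma fair_meiosis_relabel:
  fixes p :: "('g::finite) rule"
  assumes fm: "fair_meiosis ind p" and "ev \<in> events" and "\<And>y. ind (\<tau> y) = ind y"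
  shows "p (relabel \<tau> ev) x = p ev x"
proof -
  obtain R \<alpha> where ev_eq: "ev = (R, \<alpha>)" by fastforce
  define \<beta> where "\<beta> = snd (relabel \<tau> ev)"
  have "relabel \<tau> ev = (R, \<beta>)"
    by (simp add: \<beta>_def ev_eq relabel_def)
  moreover have "\<forall>k\<in>R. ind (\<beta> k) = ind (\<alpha> k)"
    by (simp add: \<beta>_def ev_eq relabel_def assms(3))
  ultimately show ?thesis
    using fm relabel_in_events[of \<tau> ev] \<open>ev \<in> events\<close> unfolding fair_meiosis_def ev_eq
    by metis
qed

lemma e_rate_eq_if_fair_meiosis:
  fixes p :: "('g::finite) rule"
  assumes fm: "fair_meiosis ind p" and "ind g = ind g'"
  shows "e_rate p x g h = e_rate p x g' h"
proof -
  \<comment> \<open>Swapping g and g' in all offspring labels matches the events placing g at h with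
    those placing g' at h, and fair meiosis keeps their probabilities.\<close>
  let ?\<tau> = "Transposition.transpose g g'"
  define A where "A c = {ev\<in>events. h \<in> fst ev \<and> snd ev h = c}" for c
  have relabel_relabel: "relabel ?\<tau> (relabel ?\<tau> ev) = ev" if "ev \<in> events" for ev
    using that by (cases ev) (auto simp: relabel_def events_def)
  have relabel_A: "relabel ?\<tau> ev \<in> A (?\<tau> c)" if "ev \<in> A c" for ev c
    using that relabel_in_events[of ?\<tau> ev] unfolding A_def by (simp add: relabel_def)
  have bij: "bij_betw (relabel ?\<tau>) (A g) (A g')"
  proof (rule bij_betw_byWitness[where f' = "relabel ?\<tau>"])
    show "\<forall>ev\<in>A g. relabel ?\<tau> (relabel ?\<tau> ev) = ev" "\<forall>ev\<in>A g'. relabel ?\<tau> (relabel ?\<tau> ev) = ev"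
      by (simp_all add: A_def relabel_relabel)
    show "relabel ?\<tau> ` A g \<subseteq> A g'" "relabel ?\<tau> ` A g' \<subseteq> A g"
      using relabel_A[of _ g] relabel_A[of _ g'] by auto
  qed
  have "(\<Sum>ev\<in>A g'. p ev x) = (\<Sum>ev\<in>A g. p (relabel ?\<tau> ev) x)"
    by (rule sum.reindex_bij_betw[OF bij, symmetric])
  also have "\<dots> = (\<Sum>ev\<in>A g. p ev x)"
  proof (rule sum.cong[OF refl])
    fix ev assume "ev \<in> A g"
    then have "ev \<in> events" by (simp add: A_def)
    moreover have "ind (?\<tau> y) = ind y" for y
      using \<open>ind g = ind g'\<close> by (simp add: Transposition.transpose_def)
    ultimately show "p (relabel ?\<tau> ev) x = p ev x"
      by (rule fair_meiosis_relabel[OF fm])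
  qed
  finally show ?thesis
    by (simp add: e_rate_def A_def)
qed

lemma lineage_foldr:
  assumes rr: "replacement_rule p" and "set es \<subseteq> events" and "\<forall>ev\<in>set es. 0 < p ev x"
  shows "(h, foldr (\<lambda>ev f. snd ev \<circ> f) es id h) \<in> (lineage (e_rate p x))\<^sup>*"
  using assms(2,3)
proof (induction es)
  case Nil
  then show ?case by simp
next
  case (Cons ev es)
  define k where "k = foldr (\<lambda>ev f. snd ev \<circ> f) es id h"
  have "(h, k) \<in> (lineage (e_rate p x))\<^sup>*"
    unfolding k_def by (rule Cons.IH) (use Cons.prems in auto)
  moreover have "(k, snd ev k) \<in> (lineage (e_rate p x))\<^sup>="
  proof (cases "k \<in> fst ev")
    case True
    then have "0 < e_rate p x (snd ev k) k"
      using p_le_e_rate[OF rr _ True, of x] Cons.prems by fastforce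
    then show ?thesis by (simp add: lineage_def)
  next
    case False
    then show ?thesis using Cons.prems by (auto simp: events_def)
  qed
  ultimately have "(h, snd ev k) \<in> (lineage (e_rate p x))\<^sup>*"
    by (auto intro: rtrancl_into_rtrancl)
  then show ?case
    by (simp add: k_def comp_def[abs_def] id_def)
qed

lemma d_rate_pos_if_lineage:
  assumes "replacement_rule p" and "(h, r) \<in> (lineage (e_rate p x))\<^sup>*" and "0 < d_rate p x r"
  shows "0 < d_rate p x h"
  using assms(2)
proof (cases rule: converse_rtranclE)
  case base
  then show ?thesis using assms(3) by simp
next
  case (step k)
  then show ?thesis
    using e_rate_le_d_rate[OF assms(1), of x k h] by (simp add: lineage_def)
qed

lemma fixation_axiom_rootE:
  assumes rr: "replacement_rule p" and "fixation_axiom p"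
  obtains r where "\<And>h. (h, r) \<in> (lineage (e_rate p x))\<^sup>*" and "0 < d_rate p x r"
proof -
  obtain r es where es: "set es \<subseteq> events" "\<forall>ev\<in>set es. \<forall>x. 0 < p ev x"
      "\<exists>ev\<in>set es. r \<in> fst ev" "\<forall>h. foldr (\<lambda>ev f. snd ev \<circ> f) es id h = r"
    using assms(2) unfolding fixation_axiom_def by blast
  have "(h, r) \<in> (lineage (e_rate p x))\<^sup>*" for h
    using lineage_foldr[OF rr es(1), of x h] es(2,4) by simp
  moreover obtain ev where ev: "ev \<in> set es" "r \<in> fst ev"
    using es(3) by blast
  have "0 < d_rate p x r"
    using es(1,2) ev p_le_e_rate[OF rr _ ev(2), of x] e_rate_le_d_rate[OF rr, of x _ r]
    by (meson less_le_trans subsetD)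
  ultimately show ?thesis using that by blast
qed

lemma d_rate_pos:
  assumes "replacement_rule p" and "fixation_axiom p"
  shows "0 < d_rate p x h"
  by (metis fixation_axiom_rootE[OF assms] d_rate_pos_if_lineage[OF assms(1)])

lemma repro_values_balanced:
  fixes p :: "('g::finite) rule"
  assumes rr: "replacement_rule p" and "fixation_axiom p"
  shows "balanced (e_rate p state_a) (repro_values p)"
proof -
  obtain r where "\<And>h. (h, r) \<in> (lineage (e_rate p state_a))\<^sup>*"
    using fixation_axiom_rootE[OF assms] by metis
  then have "\<exists>!v. balanced (e_rate p state_a) v \<and> (\<Sum>g\<in>UNIV. v g) = real CARD('g)"
    by (rule balanced_normalized_ex1[OF e_rate_nonneg[OF rr]])
  then show ?thesis
    unfolding repro_values_def d_rate_def balanced_def[symmetric] by (rule theI'[THEN conjunct1])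
qed

lemma repro_values_eq_if_same_ind:
  fixes p :: "('g::finite) rule"
  assumes rr: "replacement_rule p" and fixation: "fixation_axiom p"
    and coh: "coherence ind p" and fm: "fair_meiosis ind p" and same: "ind g = ind g'"
  shows "repro_values p g = repro_values p g'"
proof -
  let ?v = "repro_values p" and ?e = "e_rate p state_a" and ?d = "d_rate p state_a"
  have "?d g * ?v g = (\<Sum>h\<in>UNIV. ?e g h * ?v h)" "?d g' * ?v g' = (\<Sum>h\<in>UNIV. ?e g' h * ?v h)"
    using repro_values_balanced[OF rr fixation] by (simp_all add: balanced_def d_rate_def)
  moreover have "?e g = ?e g'"
    using e_rate_eq_if_fair_meiosis[OF fm same] by blast
  moreover have "?d g = ?d g'"
    by (rule d_rate_eq_if_coherent[OF rr coh same])
  ultimately have "?d g * ?v g = ?d g * ?v g'"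
    by simp
  then show ?thesis
    using d_rate_pos[OF rr fixation, of state_a g] by simp
qed

lemma b_hat_minus_d_hat_eq_if_same_ind:
  fixes p :: "('g::finite) rule"
  assumes "replacement_rule p" "fixation_axiom p" "coherence ind p" "fair_meiosis ind p"
    and same: "ind g = ind g'"
  shows "b_hat p x g - d_hat p x g = b_hat p x g' - d_hat p x g'"
  using e_rate_eq_if_fair_meiosis[OF assms(4) same] d_rate_eq_if_coherent[OF assms(1,3) same]
    repro_values_eq_if_same_ind[OF assms] by (simp add: b_hat_def d_hat_def)

lemma sum_of_bool_eq_sum_ind_X:
  fixes ind :: "'g::finite \<Rightarrow> 'i" and f :: "'g \<Rightarrow> real"
  assumes const: "\<And>g g'. ind g = ind g' \<Longrightarrow> f g = f g'"
  shows "(\<Sum>g\<in>UNIV. of_bool (x g) * f g) = (\<Sum>i\<in>range ind. ind_X ind x i * (\<Sum>g\<in>{g. ind g = i}. f g))"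
proof -
  have "(\<Sum>g\<in>UNIV. of_bool (x g) * f g) = (\<Sum>i\<in>range ind. \<Sum>g\<in>{g. ind g = i}. of_bool (x g) * f g)"
    using sum.group[of UNIV "range ind" ind "\<lambda>g. of_bool (x g) * f g"] by simp
  also have "\<dots> = (\<Sum>i\<in>range ind. ind_X ind x i * (\<Sum>g\<in>{g. ind g = i}. f g))"
  proof (rule sum.cong[OF refl])
    fix i assume "i \<in> range ind"
    then obtain g0 where g0: "ind g0 = i" by blast
    let ?G = "{g. ind g = i}"
    have "(\<Sum>g\<in>?G. of_bool (x g) * f g) = (\<Sum>g\<in>?G. of_bool (x g)) * f g0"
      unfolding sum_distrib_right by (rule sum.cong) (use const g0 in auto)
    moreover have "(\<Sum>g\<in>?G. f g) = (\<Sum>g\<in>?G. f g0)"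
      by (rule sum.cong) (use const g0 in auto)
    moreover have "card ?G \<noteq> 0"
      using g0 by (auto simp: card_eq_0_iff)
    ultimately show "(\<Sum>g\<in>?G. of_bool (x g) * f g) = ind_X ind x i * (\<Sum>g\<in>?G. f g)"
      by (simp add: ind_X_def)
  qed
  finally show ?thesis .
qed

theorem proposition5:
  fixes p :: "('g::finite) rule" and ind :: "'g \<Rightarrow> 'i"
  assumes "replacement_rule p"
    and "fixation_axiom p"
    and "assumption1 p"
    and "coherence ind p"
    and "fair_meiosis ind p"
  shows "Delta_sel p x = (\<Sum>i\<in>range ind. ind_X ind x i * (ind_W ind p x i - ind_V ind p i))"
proof -
  have "ind_W ind p x i - ind_V ind p i = (\<Sum>g\<in>{g. ind g = i}. b_hat p x g - d_hat p x g)" for i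
    by (simp add: ind_W_def ind_V_def fitness_def sum_subtractf[symmetric])
  moreover have "Delta_sel p x = (\<Sum>i\<in>range ind. ind_X ind x i * (\<Sum>g\<in>{g. ind g = i}. b_hat p x g - d_hat p x g))"
    unfolding Delta_sel_def
    by (rule sum_of_bool_eq_sum_ind_X)
       (rule b_hat_minus_d_hat_eq_if_same_ind[OF assms(1,2,4,5)])
  ultimately show ?thesis
    by simp
qed

end
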